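(* Let $\Omega\subset\mathbb{R}^2$ be open and bounded with Lipschitz boundary, let $f\in L^2(\Omega)$ be not identically zero, and for $\lambda_1,\lambda_2>0$ let $(u^*,v^* )\in BV(\Omega)\times L^2(\Omega)$ be an optimal pair for $$\min_{u\in BV(\Omega),\,v\in L^2(\Omega)}\Big\{|Du|(\Omega)+\lambda_1\|v\|_{L^1(\Omega)}+\frac{\lambda_2}{2}\|f-u-v\|_{L^2(\Omega)}^2\Big\}.$$ Then: (1) for fixed finite $\lambda_1$, $|Du^*|(\Omega)\to0$ and $v^*\to0$ in $L^1(\Omega)$ as $\lambda_2\to0$; (2) for fixed finite $\lambda_2$, $|Du^*|(\Omega)\to0$ and $v^*\to f-u^*$ in $L^2(\Omega)$ (i.e. $\|f-u^*-v^*\|_{L^2(\Omega)}\to0$) as $\lambda_1\to0$.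
   Context: $|Du|(\Omega)$ denotes the total variation of $u$ and $BV(\Omega)$ the space of functions of bounded variation; $(u^*,v^* )$ depends on $(\lambda_1,\lambda_2)$. *)

theory Defs
  imports "HOL-Analysis.Analysis"
begin

type_synonym R2 = "real ^ 2"

definition partial_field :: "(R2 \<Rightarrow> R2) \<Rightarrow> 2 \<Rightarrow> R2 \<Rightarrow> R2" where
  "partial_field \<phi> i x = frechet_derivative \<phi> (at x) (axis i 1)"

definition divergence :: "(R2 \<Rightarrow> R2) \<Rightarrow> R2 \<Rightarrow> real" where
  "divergence \<phi> x = (\<Sum>i\<in>UNIV. partial_field \<phi> i x $ i)"

definition test_fields :: "R2 set \<Rightarrow> (R2 \<Rightarrow> R2) set" where
  "test_fields \<Omega> = {\<phi>. (\<forall>x. \<phi> differentiable (at x))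
       \<and> (\<forall>i. continuous_on UNIV (partial_field \<phi> i))
       \<and> compact (closure {x. \<phi> x \<noteq> 0}) \<and> closure {x. \<phi> x \<noteq> 0} \<subseteq> \<Omega>
       \<and> (\<forall>x. norm (\<phi> x) \<le> 1)}"

definition total_variation :: "R2 set \<Rightarrow> (R2 \<Rightarrow> real) \<Rightarrow> ereal" where
  "total_variation \<Omega> u =
     (SUP \<phi>\<in>test_fields \<Omega>. ereal (LINT x|lebesgue_on \<Omega>. u x * divergence \<phi> x))"

definition BV :: "R2 set \<Rightarrow> (R2 \<Rightarrow> real) set" where
  "BV \<Omega> = {u. integrable (lebesgue_on \<Omega>) u \<and> total_variation \<Omega> u < \<infinity>}"

definition L2 :: "R2 set \<Rightarrow> (R2 \<Rightarrow> real) set" where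
  "L2 \<Omega> = {u. u \<in> borel_measurable (lebesgue_on \<Omega>)
               \<and> integrable (lebesgue_on \<Omega>) (\<lambda>x. (u x)\<^sup>2)}"

definition lipschitz_boundary :: "R2 set \<Rightarrow> bool" where
  "lipschitz_boundary \<Omega> \<longleftrightarrow>
     (\<forall>p\<in>frontier \<Omega>. \<exists>r>0. \<exists>(R::R2 \<Rightarrow> R2) (g::real \<Rightarrow> real) (L::real). orthogonal_transformation R \<and> L-lipschitz_on UNIV g \<and>
        \<Omega> \<inter> ball p r = {x\<in>ball p r. (R (x - p)) $ 2 < g ((R (x - p)) $ 1)})"

definition energy :: "R2 set \<Rightarrow> (R2 \<Rightarrow> real) \<Rightarrow> real \<Rightarrow> real \<Rightarrow> (R2 \<Rightarrow> real) \<Rightarrow> (R2 \<Rightarrow> real) \<Rightarrow> ereal" where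
  "energy \<Omega> f lam1 lam2 u v =
     total_variation \<Omega> u
     + ereal (lam1 * (LINT x|lebesgue_on \<Omega>. \<bar>v x\<bar>)
              + lam2 / 2 * (LINT x|lebesgue_on \<Omega>. (f x - u x - v x)\<^sup>2))"

definition optimal_pair :: "R2 set \<Rightarrow> (R2 \<Rightarrow> real) \<Rightarrow> real \<Rightarrow> real \<Rightarrow> (R2 \<Rightarrow> real) \<Rightarrow> (R2 \<Rightarrow> real) \<Rightarrow> bool" where
  "optimal_pair \<Omega> f lam1 lam2 u v \<longleftrightarrow> u \<in> BV \<Omega> \<and> v \<in> L2 \<Omega> \<and>
     (\<forall>u'\<in>BV \<Omega>. \<forall>v'\<in>L2 \<Omega>. energy \<Omega> f lam1 lam2 u v \<le> energy \<Omega> f lam1 lam2 u' v')"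

end

theory Submission
  imports Defs
begin

text \<open>Comparing an optimal pair with the competitors \<open>(0, 0)\<close> and \<open>(0, f)\<close> bounds its
  energy by \<open>\<lambda>\<^sub>2/2 \<parallel>f\<parallel>\<^sub>2\<^sup>2\<close> and by \<open>\<lambda>\<^sub>1 \<parallel>f\<parallel>\<^sub>1\<close> respectively. Every energy term is
  nonnegative, so each of them, in particular \<open>|Du|(\<Omega>)\<close>, obeys both bounds; dividing by the
  fixed parameter leaves bounds linear in the vanishing one.\<close>

lemma zero_in_test_fields: "(\<lambda>_. 0) \<in> test_fields \<Omega>"
  unfolding test_fields_def partial_field_def by simp

lemma divergence_zero: "divergence (\<lambda>_. 0) x = 0"
  unfolding divergence_def partial_field_def by simp

lemma total_variation_nonneg: "0 \<le> total_variation \<Omega> u"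
  unfolding total_variation_def
  by (rule SUP_upper2[OF zero_in_test_fields]) (simp add: divergence_zero)

lemma total_variation_zero: "total_variation \<Omega> (\<lambda>_. 0) = 0"
  unfolding total_variation_def
  using zero_in_test_fields[of \<Omega>] by (simp add: zero_ereal_def) (subst SUP_const; blast)

lemma zero_in_BV: "(\<lambda>_. 0) \<in> BV \<Omega>"
  unfolding BV_def by (simp add: total_variation_zero)

lemma zero_in_L2: "(\<lambda>_. 0) \<in> L2 \<Omega>"
  unfolding L2_def by simp

lemma optimal_pair_le_constant_competitor:
  assumes opt: "optimal_pair \<Omega> f lam1 lam2 u v" and "lam1 \<ge> 0" "lam2 \<ge> 0" "v' \<in> L2 \<Omega>"
  defines "B \<equiv> lam1 * (LINT x|lebesgue_on \<Omega>. \<bar>v' x\<bar>)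
                + lam2 / 2 * (LINT x|lebesgue_on \<Omega>. (f x - v' x)\<^sup>2)"
  shows "total_variation \<Omega> u \<le> ereal B"
    and "lam1 * (LINT x|lebesgue_on \<Omega>. \<bar>v x\<bar>) \<le> B"
    and "lam2 / 2 * (LINT x|lebesgue_on \<Omega>. (f x - u x - v x)\<^sup>2) \<le> B"
proof -
  define A1 where "A1 = lam1 * (LINT x|lebesgue_on \<Omega>. \<bar>v x\<bar>)"
  define A2 where "A2 = lam2 / 2 * (LINT x|lebesgue_on \<Omega>. (f x - u x - v x)\<^sup>2)"
  have "energy \<Omega> f lam1 lam2 u v \<le> energy \<Omega> f lam1 lam2 (\<lambda>_. 0) v'"
    using opt zero_in_BV assms(4) unfolding optimal_pair_def by blast
  then have le: "total_variation \<Omega> u + ereal (A1 + A2) \<le> ereal B"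
    unfolding energy_def A1_def A2_def B_def by (simp add: total_variation_zero)
  have "A1 \<ge> 0" "A2 \<ge> 0" unfolding A1_def A2_def using assms(2,3) by simp_all
  with le total_variation_nonneg[of \<Omega> u]
  show "total_variation \<Omega> u \<le> ereal B" "A1 \<le> B" "A2 \<le> B"
    by (cases "total_variation \<Omega> u"; simp)+
qed

lemma optimal_pair_bounds_linear_in_lam2:
  assumes "optimal_pair \<Omega> f lam1 lam2 u v" and "lam1 > 0" "lam2 > 0"
  defines "F \<equiv> LINT x|lebesgue_on \<Omega>. (f x)\<^sup>2"
  shows "total_variation \<Omega> u \<le> ereal (F / 2 * lam2)"
    and "(LINT x|lebesgue_on \<Omega>. \<bar>v x\<bar>) \<le> F / (2 * lam1) * lam2"
  using optimal_pair_le_constant_competitor[OF assms(1) _ _ zero_in_L2] assms(2,3)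
  by (auto simp: F_def field_simps mult.commute)

lemma optimal_pair_bounds_linear_in_lam1:
  assumes "optimal_pair \<Omega> f lam1 lam2 u v" and "lam1 > 0" "lam2 > 0" "f \<in> L2 \<Omega>"
  defines "F \<equiv> LINT x|lebesgue_on \<Omega>. \<bar>f x\<bar>"
  shows "total_variation \<Omega> u \<le> ereal (F * lam1)"
    and "(LINT x|lebesgue_on \<Omega>. (f x - u x - v x)\<^sup>2) \<le> 2 * F / lam2 * lam1"
  using optimal_pair_le_constant_competitor[OF assms(1) _ _ assms(4)] assms(2,3)
  by (auto simp: F_def field_simps mult.commute)

lemma tendsto_zero_at_right_if_linearly_bounded:
  fixes g :: "real \<Rightarrow> ereal"
  assumes "\<And>l. l > 0 \<Longrightarrow> 0 \<le> g l \<and> g l \<le> ereal (C * l)"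
  shows "(g \<longlongrightarrow> 0) (at_right 0)"
proof (rule tendsto_sandwich[OF _ _ tendsto_const])
  have "((\<lambda>l. C * l) \<longlongrightarrow> C * 0) (at_right (0::real))"
    by (intro tendsto_intros)
  then show "((\<lambda>l. ereal (C * l)) \<longlongrightarrow> 0) (at_right 0)"
    by (simp add: zero_ereal_def)
  have "\<forall>\<^sub>F l in at_right 0. l > (0::real)"
    by (simp add: eventually_at_right_less)
  then show "\<forall>\<^sub>F l in at_right 0. 0 \<le> g l" "\<forall>\<^sub>F l in at_right 0. g l \<le> ereal (C * l)"
    using assms by (auto elim: eventually_mono)
qed

lemma tendsto_zero_at_right_if_linearly_bounded_real:
  fixes g :: "real \<Rightarrow> real"
  assumes "\<And>l. l > 0 \<Longrightarrow> 0 \<le> g l \<and> g l \<le> C * l"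
  shows "(g \<longlongrightarrow> 0) (at_right 0)"
  using tendsto_zero_at_right_if_linearly_bounded[of "\<lambda>l. ereal (g l)" C] assms
  by (simp add: zero_ereal_def)

theorem corollary5p1:
  fixes \<Omega> :: "R2 set" and f :: "R2 \<Rightarrow> real"
  assumes "open \<Omega>" and "bounded \<Omega>" and "lipschitz_boundary \<Omega>"
    and "f \<in> L2 \<Omega>" and "\<not> (AE x in lebesgue_on \<Omega>. f x = 0)"
  shows "(\<forall>lam1>0. \<forall>U V. (\<forall>lam2>0. optimal_pair \<Omega> f lam1 lam2 (U lam2) (V lam2)) \<longrightarrow>
            ((\<lambda>lam2. total_variation \<Omega> (U lam2)) \<longlongrightarrow> 0) (at_right 0) \<and>
            ((\<lambda>lam2. LINT x|lebesgue_on \<Omega>. \<bar>V lam2 x\<bar>) \<longlongrightarrow> 0) (at_right 0))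
       \<and> (\<forall>lam2>0. \<forall>U V. (\<forall>lam1>0. optimal_pair \<Omega> f lam1 lam2 (U lam1) (V lam1)) \<longrightarrow>
            ((\<lambda>lam1. total_variation \<Omega> (U lam1)) \<longlongrightarrow> 0) (at_right 0) \<and>
            ((\<lambda>lam1. sqrt (LINT x|lebesgue_on \<Omega>. (f x - U lam1 x - V lam1 x)\<^sup>2)) \<longlongrightarrow> 0) (at_right 0))"
proof (intro conjI allI impI)
  define F2 where "F2 = (LINT x|lebesgue_on \<Omega>. (f x)\<^sup>2)"
  fix lam1 :: real and U V
  assume "lam1 > 0" and opt: "\<forall>lam2>0. optimal_pair \<Omega> f lam1 lam2 (U lam2) (V lam2)"
  note bounds = optimal_pair_bounds_linear_in_lam2[OF opt[rule_format] \<open>lam1 > 0\<close>, folded F2_def]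
  show "((\<lambda>lam2. total_variation \<Omega> (U lam2)) \<longlongrightarrow> 0) (at_right 0)"
    by (rule tendsto_zero_at_right_if_linearly_bounded[where C = "F2 / 2"])
      (use bounds total_variation_nonneg in auto)
  show "((\<lambda>lam2. LINT x|lebesgue_on \<Omega>. \<bar>V lam2 x\<bar>) \<longlongrightarrow> 0) (at_right 0)"
    by (rule tendsto_zero_at_right_if_linearly_bounded_real[where C = "F2 / (2 * lam1)"])
      (use bounds in auto)
next
  define F1 where "F1 = (LINT x|lebesgue_on \<Omega>. \<bar>f x\<bar>)"
  fix lam2 :: real and U V
  assume "lam2 > 0" and opt: "\<forall>lam1>0. optimal_pair \<Omega> f lam1 lam2 (U lam1) (V lam1)"
  note bounds = optimal_pair_bounds_linear_in_lam1[OF opt[rule_format] _ \<open>lam2 > 0\<close> assms(4),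
      folded F1_def]
  show "((\<lambda>lam1. total_variation \<Omega> (U lam1)) \<longlongrightarrow> 0) (at_right 0)"
    by (rule tendsto_zero_at_right_if_linearly_bounded[where C = F1])
      (use bounds total_variation_nonneg in auto)
  have "((\<lambda>lam1. LINT x|lebesgue_on \<Omega>. (f x - U lam1 x - V lam1 x)\<^sup>2) \<longlongrightarrow> 0) (at_right 0)"
    by (rule tendsto_zero_at_right_if_linearly_bounded_real[where C = "2 * F1 / lam2"])
      (use bounds in auto)
  from tendsto_real_sqrt[OF this]
  show "((\<lambda>lam1. sqrt (LINT x|lebesgue_on \<Omega>. (f x - U lam1 x - V lam1 x)\<^sup>2)) \<longlongrightarrow> 0) (at_right 0)"
    by simp
qed

end
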